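(* Let $\beta>0$ and $\varepsilon>0$. There is $c>0$ such that for every $K\in\mathbb N^\star$ and every $N$ large enough, $$\sup_{t\in[0,\varepsilon/(4c_M)]}\ \sup_J\ \mathbf P^{J,\Lambda_N,+}_{\mu^{J,+}_{\Lambda_N}}\left(\|\mathcal M_K(\sigma(t))-\mathcal M_K(\sigma(0))\|_{L^1}\ge\varepsilon\right)\le\exp(-cN^d).$$
   Context: $d\ge2$, $\Lambda_N=\{1,\dots,N\}^d$, couplings $J\in[0,1]^{E(\mathbb Z^d)}$. $\mu^{J,+}_{\Lambda_N}$ is the Ising measure with plus boundary condition on $\Lambda_N$ (weight $\propto\exp(\frac\beta2\sum_{\{x,y\}:x\in\Lambda_N,x\sim y}J_{xy}\sigma_x\sigma_y)$). $\mathbf P^{J,\Lambda_N,+}_{\mu}$ is the law of the Glauber dynamics in $\Lambda_N$ with plus boundary condition started from initial distribution $\mu$, whose spin-flip rates $c^J(x,\sigma)$ are of finite range, satisfy $c_m\le c^J\le c_M$ for constants $0<c_m\le c_M<\infty$, satisfy detailed balance, are translation invariant and attractive. For a mesoscopic scale $K$, the magnetization profile is $\mathcal M_K(\sigma):[0,1]^d\to[-1,1]$, $\mathcal M_K(\sigma)(x)=K^{-d}\sum_{z\in\Lambda_N\cap\Delta_{i(x)}}\sigma_z$, where $i(x)=([Nx_1/K],\dots,[Nx_d/K])$ and $\Delta_i=Ki+\{1,\dots,K\}^d$; $\|\cdot\|_{L^1}$ is the $L^1([0,1]^d)$ norm. *)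

theory Defs
  imports "HOL-Analysis.Analysis"
begin

type_synonym 'd site = "int ^ 'd"
type_synonym 'd config = "'d site \<Rightarrow> int"
type_synonym 'd coupling = "'d site set \<Rightarrow> real"   (* J indexed by unordered edges {x,y} *)
type_synonym 'd rates = "'d coupling \<Rightarrow> 'd site \<Rightarrow> 'd config \<Rightarrow> real"

definition l1dist :: "'d::finite site \<Rightarrow> 'd site \<Rightarrow> int" where
  "l1dist x y = (\<Sum>i\<in>UNIV. \<bar>x $ i - y $ i\<bar>)"

definition nb :: "'d::finite site \<Rightarrow> 'd site \<Rightarrow> bool" where
  "nb x y \<longleftrightarrow> l1dist x y = 1"

definition Lam :: "nat \<Rightarrow> 'd::finite site set" where
  "Lam N = {x. \<forall>i. 1 \<le> x $ i \<and> x $ i \<le> int N}"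

definition spins :: "'d config set" where
  "spins = {\<sigma>. \<forall>x. \<sigma> x = 1 \<or> \<sigma> x = -1}"

definition Omega :: "nat \<Rightarrow> 'd::finite config set" where
  "Omega N = {\<sigma> \<in> spins. \<forall>x. x \<notin> Lam N \<longrightarrow> \<sigma> x = 1}"

definition admissible :: "'d::finite coupling \<Rightarrow> bool" where
  "admissible J \<longleftrightarrow> (\<forall>x y. nb x y \<longrightarrow> 0 \<le> J {x, y} \<and> J {x, y} \<le> 1)"

definition flip :: "'d config \<Rightarrow> 'd site \<Rightarrow> 'd config" where
  "flip \<sigma> x = \<sigma>(x := - \<sigma> x)"

definition edgesN :: "nat \<Rightarrow> 'd::finite site set set" where
  "edgesN N = {{x, y} | x y. x \<in> Lam N \<and> nb x y}"

definition ising_weight :: "real \<Rightarrow> 'd::finite coupling \<Rightarrow> nat \<Rightarrow> 'd config \<Rightarrow> real" where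
  "ising_weight \<beta> J N \<sigma> =
     exp (\<beta> / 2 * (\<Sum>e\<in>edgesN N. J e * (\<Prod>z\<in>e. real_of_int (\<sigma> z))))"

definition ising :: "real \<Rightarrow> 'd::finite coupling \<Rightarrow> nat \<Rightarrow> 'd config \<Rightarrow> real" where
  "ising \<beta> J N \<sigma> = ising_weight \<beta> J N \<sigma> / (\<Sum>\<eta>\<in>Omega N. ising_weight \<beta> J N \<eta>)"

definition glauber_gen :: "'d::finite rates \<Rightarrow> 'd coupling \<Rightarrow> nat \<Rightarrow> 'd config \<Rightarrow> 'd config \<Rightarrow> real" where
  "glauber_gen c J N \<sigma> \<eta> =
     (if \<eta> = \<sigma> then - (\<Sum>x\<in>Lam N. c J x \<sigma>)
      else (\<Sum>x\<in>Lam N. if \<eta> = flip \<sigma> x then c J x \<sigma> else 0))"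

primrec mpow :: "'s set \<Rightarrow> ('s \<Rightarrow> 's \<Rightarrow> real) \<Rightarrow> nat \<Rightarrow> 's \<Rightarrow> 's \<Rightarrow> real" where
  "mpow S Q 0 = (\<lambda>a b. if a = b then 1 else 0)"
| "mpow S Q (Suc n) = (\<lambda>a b. \<Sum>z\<in>S. mpow S Q n a z * Q z b)"

definition trans_kernel :: "'s set \<Rightarrow> ('s \<Rightarrow> 's \<Rightarrow> real) \<Rightarrow> real \<Rightarrow> 's \<Rightarrow> 's \<Rightarrow> real" where
  "trans_kernel S Q t a b = (\<Sum>n. t ^ n / fact n * mpow S Q n a b)"

definition magn :: "nat \<Rightarrow> nat \<Rightarrow> 'd::finite config \<Rightarrow> real ^ 'd \<Rightarrow> real" where
  "magn K N \<sigma> u =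
     (1 / real K ^ CARD('d)) *
     (\<Sum>z\<in>{z \<in> Lam N. \<forall>j. int K * \<lfloor>real N * u $ j / real K\<rfloor> + 1 \<le> z $ j
                              \<and> z $ j \<le> int K * \<lfloor>real N * u $ j / real K\<rfloor> + int K}.
        real_of_int (\<sigma> z))"

definition L1dist :: "(real ^ 'd::finite \<Rightarrow> real) \<Rightarrow> (real ^ 'd \<Rightarrow> real) \<Rightarrow> real" where
  "L1dist f g = integral (cbox 0 One) (\<lambda>u. \<bar>f u - g u\<bar>)"

definition dyn_prob :: "real \<Rightarrow> 'd::finite rates \<Rightarrow> 'd coupling \<Rightarrow> nat \<Rightarrow> nat \<Rightarrow> real \<Rightarrow> real \<Rightarrow> real" where
  "dyn_prob \<beta> c J N K t \<epsilon> =
     (\<Sum>\<sigma>\<in>Omega N. \<Sum>\<eta>\<in>Omega N.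
        ising \<beta> J N \<sigma> * trans_kernel (Omega N) (glauber_gen c J N) t \<sigma> \<eta> *
        (if L1dist (magn K N \<eta>) (magn K N \<sigma>) \<ge> \<epsilon> then 1 else 0))"

definition rates_ok :: "real \<Rightarrow> real \<Rightarrow> real \<Rightarrow> 'd::finite rates \<Rightarrow> bool" where
  "rates_ok \<beta> cm cM c \<longleftrightarrow>
     0 < cm \<and> cm \<le> cM \<and>
     \<comment> \<open>bounds\<close>
     (\<forall>J x \<sigma>. admissible J \<and> \<sigma> \<in> spins \<longrightarrow> cm \<le> c J x \<sigma> \<and> c J x \<sigma> \<le> cM) \<and>
     \<comment> \<open>finite range\<close>
     (\<exists>R::int. \<forall>J J' x \<sigma> \<sigma>'. admissible J \<and> admissible J' \<and> \<sigma> \<in> spins \<and> \<sigma>' \<in> spins \<and>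
         (\<forall>y. l1dist x y \<le> R \<longrightarrow> \<sigma> y = \<sigma>' y) \<and>
         (\<forall>y z. nb y z \<and> l1dist x y \<le> R \<and> l1dist x z \<le> R \<longrightarrow> J {y, z} = J' {y, z})
         \<longrightarrow> c J x \<sigma> = c J' x \<sigma>') \<and>
     \<comment> \<open>detailed balance w.r.t. the Ising Gibbs weights\<close>
     (\<forall>J x \<sigma>. admissible J \<and> \<sigma> \<in> spins \<longrightarrow>
         c J x \<sigma> = c J x (flip \<sigma> x) *
            exp (- \<beta> * (\<Sum>y\<in>{y. nb x y}. J {x, y} * real_of_int (\<sigma> x * \<sigma> y)))) \<and>
     \<comment> \<open>translation invariance\<close>
     (\<forall>J x \<sigma> a. admissible J \<and> \<sigma> \<in> spins \<longrightarrow>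
         c (\<lambda>e. J ((\<lambda>u. u + a) ` e)) x (\<lambda>u. \<sigma> (u + a)) = c J (x + a) \<sigma>) \<and>
     \<comment> \<open>attractiveness\<close>
     (\<forall>J x \<sigma> \<eta>. admissible J \<and> \<sigma> \<in> spins \<and> \<eta> \<in> spins \<and> (\<forall>y. \<sigma> y \<le> \<eta> y) \<longrightarrow>
         (\<sigma> x = 1 \<and> \<eta> x = 1 \<longrightarrow> c J x \<eta> \<le> c J x \<sigma>) \<and>
         (\<sigma> x = -1 \<and> \<eta> x = -1 \<longrightarrow> c J x \<sigma> \<le> c J x \<eta>))"

end

theory Submission
  imports Defs
begin

text \<open>
  Let \<open>D\<^sub>t\<close> be the number of sites of \<open>\<Lambda>\<^sub>N\<close> at which \<open>\<sigma>(t)\<close> differs from \<open>\<sigma>(0)\<close>.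
  Changing one spin changes one block average of \<open>\<M>\<^sub>K\<close> by \<open>2/K\<^sup>d\<close> on a box of volume at most
  \<open>(K/N)\<^sup>d\<close>, so \<open>\<parallel>\<M>\<^sub>K(\<sigma>(t)) - \<M>\<^sub>K(\<sigma>(0))\<parallel>\<^sub>1 \<le> 2 D\<^sub>t / N\<^sup>d\<close> and the event forces
  \<open>D\<^sub>t \<ge> \<epsilon> N\<^sup>d / 2\<close>. A flip raises \<open>D\<close> by at most one and every rate is at most \<open>c\<^sub>M\<close>,
  so the generator \<open>Q\<close> satisfies \<open>Q g \<le> c\<^sub>M N\<^sup>d (exp \<theta> - 1) g\<close> for \<open>g = exp (\<theta> D)\<close>, whence
  \<open>E g(\<sigma>(t)) \<le> exp (c\<^sub>M N\<^sup>d (exp \<theta> - 1) t) g(\<sigma>(0))\<close>. Exponential Chebyshev with \<open>\<theta> = 1/2\<close>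
  and \<open>t \<le> \<epsilon>/(4 c\<^sub>M)\<close> gives the bound \<open>exp (-\<epsilon> (2 - exp (1/2)) N\<^sup>d / 4)\<close> for every starting
  configuration, hence also under the Ising initial law. The semigroup inequality is proved by
  uniformization: \<open>Q + a I\<close> is entrywise nonnegative for \<open>a = c\<^sub>M N\<^sup>d\<close> and
  \<open>exp (t Q) = exp (-a t) exp (t (Q + a I))\<close>, whose series can be bounded termwise.

  The bound holds for every \<open>N \<ge> 1\<close>.
\<close>

section \<open>Continuous-time Markov chains on a finite state space\<close>

definition gen_op :: "'s set \<Rightarrow> ('s \<Rightarrow> 's \<Rightarrow> real) \<Rightarrow> ('s \<Rightarrow> real) \<Rightarrow> 's \<Rightarrow> real" where
  "gen_op S Q f z = (\<Sum>b\<in>S. Q z b * f b)"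

definition uniformized_op :: "'s set \<Rightarrow> ('s \<Rightarrow> 's \<Rightarrow> real) \<Rightarrow> real \<Rightarrow> ('s \<Rightarrow> real) \<Rightarrow> 's \<Rightarrow> real" where
  "uniformized_op S Q a f z = gen_op S Q f z + a * f z"

definition l1_norm_on :: "'s set \<Rightarrow> ('s \<Rightarrow> real) \<Rightarrow> real" where
  "l1_norm_on S f = (\<Sum>b\<in>S. \<bar>f b\<bar>)"

lemma sum_mpow_mult_eq_gen_op_funpow:
  assumes "finite S" "a \<in> S"
  shows "(\<Sum>b\<in>S. mpow S Q n a b * f b) = (gen_op S Q ^^ n) f a"
proof (induction n arbitrary: f)
  case 0
  then show ?case
    using assms by (simp add: if_distrib[where f="\<lambda>x. x * f _"] sum.delta cong: if_cong)
next
  case (Suc n)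
  have "(\<Sum>b\<in>S. mpow S Q (Suc n) a b * f b) = (\<Sum>b\<in>S. \<Sum>z\<in>S. mpow S Q n a z * Q z b * f b)"
    by (simp add: sum_distrib_right)
  also have "\<dots> = (\<Sum>z\<in>S. mpow S Q n a z * gen_op S Q f z)"
    by (subst sum.swap) (simp add: gen_op_def sum_distrib_left mult.assoc)
  also have "\<dots> = (gen_op S Q ^^ n) (gen_op S Q f) a"
    using Suc by simp
  finally show ?case
    by (simp add: funpow_Suc_right del: funpow.simps)
qed

lemma abs_le_l1_norm_on: "finite S \<Longrightarrow> z \<in> S \<Longrightarrow> \<bar>f z\<bar> \<le> l1_norm_on S f"
  unfolding l1_norm_on_def by (rule member_le_sum) auto

lemma l1_norm_on_gen_op_le:
  assumes "finite S"
  shows "l1_norm_on S (gen_op S Q f) \<le> (\<Sum>z\<in>S. \<Sum>b\<in>S. \<bar>Q z b\<bar>) * l1_norm_on S f"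
proof -
  have "l1_norm_on S (gen_op S Q f) \<le> (\<Sum>z\<in>S. \<Sum>b\<in>S. \<bar>Q z b\<bar> * \<bar>f b\<bar>)"
    unfolding l1_norm_on_def gen_op_def
    by (intro sum_mono order_trans[OF sum_abs]) (simp add: abs_mult)
  also have "\<dots> \<le> (\<Sum>z\<in>S. \<Sum>b\<in>S. \<bar>Q z b\<bar> * l1_norm_on S f)"
    by (intro sum_mono mult_left_mono abs_le_l1_norm_on assms) auto
  finally show ?thesis
    by (simp add: sum_distrib_right)
qed

lemma l1_norm_on_uniformized_op_le:
  assumes "finite S"
  shows "l1_norm_on S (uniformized_op S Q a f)
           \<le> ((\<Sum>z\<in>S. \<Sum>b\<in>S. \<bar>Q z b\<bar>) + \<bar>a\<bar>) * l1_norm_on S f"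
proof -
  have "l1_norm_on S (uniformized_op S Q a f) \<le> l1_norm_on S (gen_op S Q f) + \<bar>a\<bar> * l1_norm_on S f"
    unfolding l1_norm_on_def uniformized_op_def
    by (simp add: sum_distrib_left sum.distrib[symmetric] sum_mono abs_triangle_ineq[THEN order_trans] abs_mult)
  then show ?thesis
    using l1_norm_on_gen_op_le[OF assms, of Q f] by (simp add: algebra_simps)
qed

lemma abs_funpow_le_l1_norm_on:
  assumes "finite S" "z \<in> S" "0 \<le> L" "\<And>f. l1_norm_on S (T f) \<le> L * l1_norm_on S f"
  shows "\<bar>(T ^^ n) f z\<bar> \<le> L ^ n * l1_norm_on S f"
proof -
  have "l1_norm_on S ((T ^^ n) f) \<le> L ^ n * l1_norm_on S f"
  proof (induction n)
    case (Suc n)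
    have "l1_norm_on S ((T ^^ Suc n) f) \<le> L * l1_norm_on S ((T ^^ n) f)"
      using assms(4) by simp
    also have "\<dots> \<le> L * (L ^ n * l1_norm_on S f)"
      by (rule mult_left_mono[OF Suc assms(3)])
    finally show ?case
      by simp
  qed simp
  then show ?thesis
    using abs_le_l1_norm_on[OF assms(1,2)] order_trans by blast
qed

lemma exp_real_sums: "(\<lambda>n. x ^ n / fact n) sums exp (x :: real)"
  using exp_converges[of x] by (simp add: divide_inverse mult.commute)

lemma summable_exp_series_funpow:
  fixes t :: real
  assumes "finite S" "z \<in> S" "0 \<le> L" "\<And>f. l1_norm_on S (T f) \<le> L * l1_norm_on S f"
  shows "summable (\<lambda>n. norm (t ^ n / fact n * (T ^^ n) f z))"
proof (rule summable_comparison_test')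
  show "summable (\<lambda>n. l1_norm_on S f * ((\<bar>t\<bar> * L) ^ n / fact n))"
    by (rule summable_mult, rule sums_summable[OF exp_real_sums])
next
  fix n
  have "norm (norm (t ^ n / fact n * (T ^^ n) f z)) = \<bar>t\<bar> ^ n / fact n * \<bar>(T ^^ n) f z\<bar>"
    by (simp add: abs_mult power_abs)
  also have "\<dots> \<le> \<bar>t\<bar> ^ n / fact n * (L ^ n * l1_norm_on S f)"
    by (intro mult_left_mono abs_funpow_le_l1_norm_on assms) auto
  finally show "norm (norm (t ^ n / fact n * (T ^^ n) f z)) \<le> l1_norm_on S f * ((\<bar>t\<bar> * L) ^ n / fact n)"
    by (simp add: power_mult_distrib mult_ac)
qed

lemma trans_kernel_sum_eq_exp_series:
  assumes "finite S" "\<sigma> \<in> S"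
  shows "(\<Sum>\<eta>\<in>S. trans_kernel S Q t \<sigma> \<eta> * f \<eta>) = (\<Sum>n. t ^ n / fact n * (gen_op S Q ^^ n) f \<sigma>)"
proof -
  have summable: "summable (\<lambda>n. t ^ n / fact n * mpow S Q n \<sigma> \<eta>)" if "\<eta> \<in> S" for \<eta>
  proof -
    have "mpow S Q n \<sigma> \<eta> = (gen_op S Q ^^ n) (\<lambda>b. if b = \<eta> then 1 else 0) \<sigma>" for n
      using sum_mpow_mult_eq_gen_op_funpow[OF assms, of Q n "\<lambda>b. if b = \<eta> then 1 else 0"] assms(1) that
      by (simp add: if_distrib[where f="\<lambda>x. _ * x"] sum.delta' cong: if_cong)
    then show ?thesis
      using summable_exp_series_funpow[OF assms _ l1_norm_on_gen_op_le[OF assms(1)]]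
      by (simp add: sum_nonneg summable_norm_cancel)
  qed
  have "(\<Sum>\<eta>\<in>S. trans_kernel S Q t \<sigma> \<eta> * f \<eta>) = (\<Sum>\<eta>\<in>S. \<Sum>n. t ^ n / fact n * mpow S Q n \<sigma> \<eta> * f \<eta>)"
    unfolding trans_kernel_def by (intro sum.cong refl suminf_mult2 summable) auto
  also have "\<dots> = (\<Sum>n. \<Sum>\<eta>\<in>S. t ^ n / fact n * mpow S Q n \<sigma> \<eta> * f \<eta>)"
    by (intro suminf_sum[symmetric] summable_mult2 summable) auto
  also have "\<dots> = (\<Sum>n. t ^ n / fact n * (gen_op S Q ^^ n) f \<sigma>)"
    by (simp add: sum_mpow_mult_eq_gen_op_funpow[OF assms, symmetric] sum_distrib_left mult.assoc)
  finally show ?thesis .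
qed

lemma sum_binomial_difference_step:
  fixes s :: "nat \<Rightarrow> real"
  shows "(\<Sum>k\<le>n. real (n choose k) * (-a) ^ (n - k) * (s (Suc k) - a * s k)) =
         (\<Sum>k\<le>Suc n. real (Suc n choose k) * (-a) ^ (Suc n - k) * s k)"
proof -
  have split: "(\<Sum>k\<le>n. real (n choose k) * (-a) ^ (n - k) * (s (Suc k) - a * s k)) =
      (\<Sum>k\<le>n. real (n choose k) * (-a) ^ (n - k) * s (Suc k))
      + (\<Sum>k\<le>n. real (n choose k) * (-a) ^ (Suc n - k) * s k)"
    by (auto simp: sum.distrib[symmetric] algebra_simps Suc_diff_le intro!: sum.cong)
  have pascal: "(\<Sum>k\<le>Suc n. real (Suc n choose k) * (-a) ^ (Suc n - k) * s k) =
      (-a) ^ Suc n * s 0 + (\<Sum>k\<le>n. real (n choose k) * (-a) ^ (n - k) * s (Suc k))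
      + (\<Sum>k\<le>n. real (n choose Suc k) * (-a) ^ (n - k) * s (Suc k))"
    by (subst sum.atMost_Suc_shift)
      (simp only: binomial_Suc_Suc of_nat_add distrib_right sum.distrib diff_Suc_Suc, simp)
  have shift: "(\<Sum>k\<le>n. real (n choose k) * (-a) ^ (Suc n - k) * s k) =
      (-a) ^ Suc n * s 0 + (\<Sum>k\<le>n. real (n choose Suc k) * (-a) ^ (n - k) * s (Suc k))"
    using sum.atMost_Suc_shift[of "\<lambda>k. real (n choose k) * (-a) ^ (Suc n - k) * s k" n] by (simp add: binomial_eq_0)
  show ?thesis
    using split pascal shift by linarith
qed

text \<open>Binomial expansion of \<open>Q\<^sup>n = ((Q + aI) - aI)\<^sup>n\<close>.\<close>

lemma gen_op_funpow_binomial: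
  "(gen_op S Q ^^ n) f z =
     (\<Sum>k\<le>n. real (n choose k) * (-a) ^ (n - k) * (uniformized_op S Q a ^^ k) f z)"
proof (induction n arbitrary: z)
  case (Suc n)
  have "(gen_op S Q ^^ Suc n) f z
      = gen_op S Q (\<lambda>z. \<Sum>k\<le>n. (real (n choose k) * (-a) ^ (n - k)) * (uniformized_op S Q a ^^ k) f z) z"
    by (simp only: funpow.simps comp_def ext[OF Suc.IH] mult.assoc)
  also have "\<dots> = (\<Sum>k\<le>n. real (n choose k) * (-a) ^ (n - k) *
                     ((uniformized_op S Q a ^^ Suc k) f z - a * (uniformized_op S Q a ^^ k) f z))"
    by (simp add: gen_op_def uniformized_op_def sum_distrib_left sum.swap[of _ S] mult_ac)
  also have "\<dots> = (\<Sum>k\<le>Suc n. real (Suc n choose k) * (-a) ^ (Suc n - k) * (uniformized_op S Q a ^^ k) f z)"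
    by (rule sum_binomial_difference_step)
  finally show ?case .
qed simp

lemma exp_series_uniformization:
  fixes t :: real
  assumes "finite S" "\<sigma> \<in> S"
  shows "summable (\<lambda>k. t ^ k / fact k * (uniformized_op S Q a ^^ k) f \<sigma>)"
    and "(\<Sum>n. t ^ n / fact n * (gen_op S Q ^^ n) f \<sigma>)
           = exp (- a * t) * (\<Sum>k. t ^ k / fact k * (uniformized_op S Q a ^^ k) f \<sigma>)"
proof -
  let ?u = "\<lambda>k. t ^ k / fact k * (uniformized_op S Q a ^^ k) f \<sigma>"
  let ?e = "\<lambda>k. (- a * t) ^ k / fact k"
  have L: "0 \<le> (\<Sum>z\<in>S. \<Sum>b\<in>S. \<bar>Q z b\<bar>) + \<bar>a\<bar>"
    by (intro add_nonneg_nonneg sum_nonneg) auto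
  have norm_u: "summable (\<lambda>k. norm (?u k))"
    by (rule summable_exp_series_funpow[OF assms L l1_norm_on_uniformized_op_le[OF assms(1)]])
  then show "summable ?u"
    by (rule summable_norm_cancel)
  have norm_e: "summable (\<lambda>k. norm (?e k))"
    using sums_summable[OF exp_real_sums[of "\<bar>a * t\<bar>"]] by (simp add: power_abs)
  have coeff: "(\<Sum>i\<le>n. ?u i * ?e (n - i)) = t ^ n / fact n * (gen_op S Q ^^ n) f \<sigma>" for n
  proof -
    have "?u k * ?e (n - k) =
            t ^ n / fact n * (real (n choose k) * (-a) ^ (n - k) * (uniformized_op S Q a ^^ k) f \<sigma>)"
      if "k \<le> n" for k
    proof -
      have "t ^ n = t ^ k * t ^ (n - k)"
        using that by (simp add: power_add[symmetric])
      then show ?thesis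
        unfolding binomial_fact[OF that] power_mult_distrib by (simp add: divide_simps)
    qed
    then show ?thesis
      by (simp add: gen_op_funpow_binomial[where a = a] sum_distrib_left)
  qed
  have "(\<Sum>k. ?u k) * (\<Sum>k. ?e k) = (\<Sum>n. \<Sum>i\<le>n. ?u i * ?e (n - i))"
    by (rule sums_unique[OF Cauchy_product_sums[OF norm_u norm_e]])
  then have "(\<Sum>n. t ^ n / fact n * (gen_op S Q ^^ n) f \<sigma>) = (\<Sum>k. ?u k) * (\<Sum>k. ?e k)"
    by (simp only: coeff)
  then show "(\<Sum>n. t ^ n / fact n * (gen_op S Q ^^ n) f \<sigma>) = exp (- a * t) * (\<Sum>k. ?u k)"
    by (simp add: sums_unique[OF exp_real_sums, symmetric])
qed

lemma uniformized_op_mono: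
  assumes "finite S" "z \<in> S"
    and "\<And>b. b \<in> S \<Longrightarrow> 0 \<le> Q z b + (if z = b then a else 0)"
    and "\<And>b. b \<in> S \<Longrightarrow> f b \<le> g b"
  shows "uniformized_op S Q a f z \<le> uniformized_op S Q a g z"
proof -
  have expand: "uniformized_op S Q a h z = (\<Sum>b\<in>S. (Q z b + (if z = b then a else 0)) * h b)" for h
    using assms(1,2)
    by (simp add: uniformized_op_def gen_op_def distrib_right sum.distrib
        if_distrib[where f="\<lambda>x. x * h _"] sum.delta cong: if_cong)
  show ?thesis
    unfolding expand using assms(3,4) by (intro sum_mono mult_left_mono) auto
qed

text \<open>
  The uniformized operator is monotone, so \<open>Q g \<le> r g\<close> can be iterated termwise in the
  series of \<open>exp (t (Q + a I))\<close>.
\<close>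

lemma trans_kernel_sum_le_supersolution:
  assumes fin: "finite S" and \<sigma>: "\<sigma> \<in> S" and t: "0 \<le> t"
    and nonneg: "\<And>z b. z \<in> S \<Longrightarrow> b \<in> S \<Longrightarrow> 0 \<le> Q z b + (if z = b then a else 0)"
    and hg: "\<And>z. z \<in> S \<Longrightarrow> h z \<le> g z"
    and super: "\<And>z. z \<in> S \<Longrightarrow> gen_op S Q g z \<le> r * g z"
    and rate: "0 \<le> r + a"
  shows "(\<Sum>\<eta>\<in>S. trans_kernel S Q t \<sigma> \<eta> * h \<eta>) \<le> exp (r * t) * g \<sigma>"
proof -
  let ?U = "uniformized_op S Q a"
  have iterate: "(?U ^^ k) h z \<le> (r + a) ^ k * g z" if "z \<in> S" for k z
    using that
  proof (induction k arbitrary: z)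
    case (Suc k)
    have "(?U ^^ Suc k) h z \<le> ?U (\<lambda>z. (r + a) ^ k * g z) z"
      using Suc by (auto intro!: uniformized_op_mono[OF fin] nonneg)
    also have "\<dots> = (r + a) ^ k * (gen_op S Q g z + a * g z)"
      by (simp add: uniformized_op_def gen_op_def sum_distrib_left algebra_simps)
    also have "\<dots> \<le> (r + a) ^ k * ((r + a) * g z)"
      using super[OF Suc.prems] rate by (intro mult_left_mono) (auto simp: algebra_simps)
    finally show ?case
      by (simp add: algebra_simps)
  qed (use hg in simp)
  have "(\<Sum>\<eta>\<in>S. trans_kernel S Q t \<sigma> \<eta> * h \<eta>) = exp (- a * t) * (\<Sum>k. t ^ k / fact k * (?U ^^ k) h \<sigma>)"
    using trans_kernel_sum_eq_exp_series[OF fin \<sigma>] exp_series_uniformization(2)[OF fin \<sigma>] by simp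
  also have "\<dots> \<le> exp (- a * t) * (\<Sum>k. ((r + a) * t) ^ k / fact k * g \<sigma>)"
  proof (intro mult_left_mono suminf_le)
    show "t ^ k / fact k * (?U ^^ k) h \<sigma> \<le> ((r + a) * t) ^ k / fact k * g \<sigma>" for k
      using mult_left_mono[OF iterate[OF \<sigma>, of k], of "t ^ k / fact k"] t
      by (simp add: power_mult_distrib mult_ac)
    show "summable (\<lambda>k. t ^ k / fact k * (?U ^^ k) h \<sigma>)"
      by (rule exp_series_uniformization(1)[OF fin \<sigma>])
    show "summable (\<lambda>k. ((r + a) * t) ^ k / fact k * g \<sigma>)"
      by (rule summable_mult2, rule sums_summable[OF exp_real_sums])
  qed simp
  also have "\<dots> = exp (- a * t) * (exp ((r + a) * t) * g \<sigma>)"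
    using sums_unique[OF sums_mult2[OF exp_real_sums]] by simp
  also have "\<dots> = exp (r * t) * g \<sigma>"
    by (simp add: mult.assoc[symmetric] exp_add[symmetric] algebra_simps)
  finally show ?thesis .
qed

section \<open>Magnetization profiles\<close>

lemma Lam_eq_image_PiE: "(Lam N :: 'd::finite site set) = vec_lambda ` (UNIV \<rightarrow>\<^sub>E {1..int N})"
proof (intro set_eqI iffI)
  fix x :: "'d site"
  assume "x \<in> Lam N"
  then have "(\<lambda>i. x $ i) \<in> UNIV \<rightarrow>\<^sub>E {1..int N}"
    by (auto simp: Lam_def)
  then show "x \<in> vec_lambda ` (UNIV \<rightarrow>\<^sub>E {1..int N})"
    by (rule rev_image_eqI) simp
qed (auto simp: Lam_def)

lemma finite_Lam: "finite (Lam N :: 'd::finite site set)"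
  unfolding Lam_eq_image_PiE by (intro finite_imageI finite_PiE) auto

lemma card_Lam: "card (Lam N :: 'd::finite site set) = N ^ CARD('d)"
proof -
  have "inj_on vec_lambda (UNIV \<rightarrow>\<^sub>E {1..int N} :: ('d \<Rightarrow> int) set)"
    by (auto simp: inj_on_def vec_lambda_inject)
  then show ?thesis
    unfolding Lam_eq_image_PiE by (simp add: card_image card_PiE)
qed

text \<open>The closure of the set of \<open>u\<close> whose block \<open>\<Delta>\<^sub>i\<^sub>(\<^sub>u\<^sub>)\<close> contains the site \<open>z\<close>.\<close>

definition block_box :: "nat \<Rightarrow> nat \<Rightarrow> 'd::finite site \<Rightarrow> (real ^ 'd) set" where
  "block_box K N z =
     cbox (\<chi> j. real_of_int (int K * ((z $ j - 1) div int K)) / real N)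
          (\<chi> j. real_of_int (int K * ((z $ j - 1) div int K) + int K) / real N)"

lemma block_index_eq_div:
  fixes K f z :: int
  assumes "K \<ge> 1" "K * f + 1 \<le> z" "z \<le> K * f + K"
  shows "f = (z - 1) div K"
proof -
  have "(z - 1) div K = f + (z - 1 - K * f) div K"
    using assms(1) div_mult_self1[of K "z - 1 - K * f" f] by (simp add: algebra_simps)
  also have "(z - 1 - K * f) div K = 0"
    using assms by (intro div_pos_pos_trivial) auto
  finally show ?thesis
    by simp
qed

lemma mem_block_box:
  fixes u :: "real ^ 'd::finite" and z :: "'d site"
  assumes K: "K \<ge> 1" and N: "N \<ge> 1"
    and z: "\<forall>j. int K * \<lfloor>real N * u $ j / real K\<rfloor> + 1 \<le> z $ j
               \<and> z $ j \<le> int K * \<lfloor>real N * u $ j / real K\<rfloor> + int K"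
  shows "u \<in> block_box K N z"
  unfolding block_box_def mem_box_cart(2)
proof (intro allI)
  fix j
  let ?f = "\<lfloor>real N * u $ j / real K\<rfloor>"
  have f: "?f = (z $ j - 1) div int K"
    by (rule block_index_eq_div) (use K z in auto)
  have pos: "real K > 0" "real N > 0"
    using K N by auto
  have "real_of_int ?f * real K \<le> real N * u $ j"
    using of_int_floor_le[of "real N * u $ j / real K"] by (simp only: pos_le_divide_eq[OF pos(1)])
  moreover have "real N * u $ j < (real_of_int ?f + 1) * real K"
    using real_of_int_floor_add_one_gt[of "real N * u $ j / real K"]
    by (simp only: pos_divide_less_eq[OF pos(1)])
  ultimately
  show "(\<chi> j. real_of_int (int K * ((z $ j - 1) div int K)) / real N) $ j \<le> u $ j \<and>
             u $ j \<le> (\<chi> j. real_of_int (int K * ((z $ j - 1) div int K) + int K) / real N) $ j"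
    using pos by (simp add: f[symmetric] pos_divide_le_eq pos_le_divide_eq algebra_simps)
qed

lemma has_integral_indicator_cbox:
  "(indicator (cbox a b) has_integral measure lborel (cbox a b \<inter> cbox c d)) (cbox c (d :: 'a::euclidean_space))"
proof -
  obtain A B where AB: "cbox a b \<inter> cbox c d = cbox A B"
    using Int_interval by blast
  have "((\<lambda>x. 1::real) has_integral measure lborel (cbox A B)) (cbox A B)"
    using has_integral_const[of "1::real" A B] by simp
  then show ?thesis
    unfolding indicator_def
    by (simp add: AB[symmetric] has_integral_restrict_Int[symmetric] of_bool_def del: Int_iff)
qed

lemma measure_block_box_Int_le:
  assumes "K \<ge> 1" "N \<ge> 1"
  shows "measure lborel (block_box K N z \<inter> cbox 0 (One :: real ^ 'd::finite)) \<le> (real K / real N) ^ CARD('d)"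
proof -
  obtain A B where AB: "block_box K N z \<inter> cbox 0 (One :: real ^ 'd) = cbox A B"
    unfolding block_box_def using Int_interval by blast
  then have "measure lborel (block_box K N z \<inter> cbox 0 One) \<le> measure lborel (block_box K N z)"
    unfolding block_box_def by (metis content_subset inf_le1)
  also have "\<dots> \<le> (\<Prod>i\<in>(UNIV::'d set). real K / real N)"
    unfolding block_box_def content_cbox_if_cart
    by (auto simp: diff_divide_distrib[symmetric])
  finally show ?thesis
    by simp
qed

definition hamming_dist :: "nat \<Rightarrow> 'd::finite config \<Rightarrow> 'd config \<Rightarrow> nat" where
  "hamming_dist N \<sigma> \<eta> = card {z \<in> Lam N. \<eta> z \<noteq> \<sigma> z}"

lemma abs_magn_diff_le:
  fixes \<sigma> \<eta> :: "'d::finite config"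
  assumes K: "K \<ge> 1" and N: "N \<ge> 1" and spins: "\<sigma> \<in> spins" "\<eta> \<in> spins"
  shows "\<bar>magn K N \<eta> u - magn K N \<sigma> u\<bar> \<le>
           (\<Sum>z\<in>{z \<in> Lam N. \<eta> z \<noteq> \<sigma> z}. 2 / real K ^ CARD('d) * indicator (block_box K N z) u)"
proof -
  let ?in_block = "\<lambda>z::'d site. \<forall>j. int K * \<lfloor>real N * u $ j / real K\<rfloor> + 1 \<le> z $ j
                              \<and> z $ j \<le> int K * \<lfloor>real N * u $ j / real K\<rfloor> + int K"
  let ?d = "\<lambda>z. if ?in_block z then real_of_int (\<eta> z) - real_of_int (\<sigma> z) else 0"
  have "(\<Sum>z\<in>Lam N. ?d z) = (\<Sum>z\<in>{z \<in> Lam N. ?in_block z}. real_of_int (\<eta> z) - real_of_int (\<sigma> z))"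
    by (simp add: sum.inter_filter[OF finite_Lam])
  then have eq: "\<bar>magn K N \<eta> u - magn K N \<sigma> u\<bar> = \<bar>\<Sum>z\<in>Lam N. ?d z\<bar> / real K ^ CARD('d)"
    by (simp add: magn_def sum_subtractf diff_divide_distrib[symmetric] abs_divide)
  have "\<bar>\<Sum>z\<in>Lam N. ?d z\<bar> \<le> (\<Sum>z\<in>Lam N. if \<eta> z \<noteq> \<sigma> z then 2 * indicator (block_box K N z) u else 0)"
  proof (intro order_trans[OF sum_abs] sum_mono)
    fix z
    have "\<bar>real_of_int (\<eta> z) - real_of_int (\<sigma> z)\<bar> \<le> 2"
      using spins by (auto simp: spins_def dest!: spec[of _ z])
    then show "\<bar>?d z\<bar> \<le> (if \<eta> z \<noteq> \<sigma> z then 2 * indicator (block_box K N z) u else 0)"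
      using mem_block_box[OF K N] by (auto simp: indicator_def)
  qed
  also have "\<dots> = (\<Sum>z\<in>{z \<in> Lam N. \<eta> z \<noteq> \<sigma> z}. 2 * indicator (block_box K N z) u)"
    by (simp add: sum.inter_filter[OF finite_Lam])
  finally show ?thesis
    unfolding eq by (simp add: sum_divide_distrib[symmetric] divide_right_mono)
qed

lemma L1dist_magn_le:
  fixes \<sigma> \<eta> :: "'d::finite config"
  assumes K: "K \<ge> 1" and N: "N \<ge> 1" and spins: "\<sigma> \<in> spins" "\<eta> \<in> spins"
  shows "L1dist (magn K N \<eta>) (magn K N \<sigma>) \<le> 2 * real (hamming_dist N \<sigma> \<eta>) / real N ^ CARD('d)"
proof -
  let ?D = "{z \<in> Lam N. \<eta> z \<noteq> \<sigma> z}"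
  let ?c = "2 / real K ^ CARD('d)"
  let ?I = "\<Sum>z\<in>?D. ?c * measure lborel (block_box K N z \<inter> cbox 0 One)"
  have finite_D: "finite ?D"
    by (rule finite_subset[OF _ finite_Lam]) auto
  have majorant: "((\<lambda>u. \<Sum>z\<in>?D. ?c * indicator (block_box K N z) u) has_integral ?I) (cbox 0 One)"
    unfolding block_box_def by (intro has_integral_sum finite_D has_integral_mult_right has_integral_indicator_cbox)
  have "L1dist (magn K N \<eta>) (magn K N \<sigma>) \<le> ?I"
  proof (cases "(\<lambda>u. \<bar>magn K N \<eta> u - magn K N \<sigma> u\<bar>) integrable_on cbox 0 One")
    case True
    then show ?thesis
      unfolding L1dist_def
      by (rule has_integral_le[OF integrable_integral majorant abs_magn_diff_le[OF K N spins]])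
  next
    case False \<comment> \<open>\<open>integral\<close> returns \<open>0\<close> here, so integrability need not be proved\<close>
    then show ?thesis
      by (simp add: L1dist_def not_integrable_integral sum_nonneg)
  qed
  also have "\<dots> \<le> (\<Sum>z\<in>?D. ?c * (real K / real N) ^ CARD('d))"
    by (intro sum_mono mult_left_mono measure_block_box_Int_le K N) simp
  also have "\<dots> = 2 * real (hamming_dist N \<sigma> \<eta>) / real N ^ CARD('d)"
    using K by (simp add: hamming_dist_def power_divide)
  finally show ?thesis .
qed

lemma hamming_dist_ge_of_L1dist_magn_ge:
  fixes \<sigma> \<eta> :: "'d::finite config"
  assumes K: "K \<ge> 1" and N: "N \<ge> 1" and spins: "\<sigma> \<in> spins" "\<eta> \<in> spins"
    and "\<epsilon> \<le> L1dist (magn K N \<eta>) (magn K N \<sigma>)"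
  shows "\<epsilon> * real N ^ CARD('d) / 2 \<le> real (hamming_dist N \<sigma> \<eta>)"
proof -
  have "\<epsilon> \<le> 2 * real (hamming_dist N \<sigma> \<eta>) / real N ^ CARD('d)"
    using assms(5) L1dist_magn_le[OF K N spins] by linarith
  then show ?thesis
    using N by (simp add: pos_le_divide_eq)
qed

section \<open>Glauber dynamics\<close>

lemma finite_Omega: "finite (Omega N :: 'd::finite config set)"
proof (rule finite_subset)
  show "Omega N \<subseteq> {\<sigma>. \<forall>x. (x \<in> Lam N \<longrightarrow> \<sigma> x \<in> {-1, 1}) \<and> (x \<notin> Lam N \<longrightarrow> \<sigma> x = 1)}"
    by (auto simp: Omega_def spins_def)
qed (intro finite_set_of_finite_funs finite_Lam, simp)

lemma flip_mem_Omega: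
  assumes "\<eta> \<in> Omega N" "x \<in> Lam N"
  shows "flip \<eta> x \<in> Omega N - {\<eta>}"
proof -
  have "\<eta> x = 1 \<or> \<eta> x = -1"
    using assms by (auto simp: Omega_def spins_def)
  then have "flip \<eta> x x \<noteq> \<eta> x"
    by (auto simp: flip_def)
  then have "flip \<eta> x \<noteq> \<eta>"
    by metis
  moreover have "flip \<eta> x \<in> Omega N"
    using assms by (auto simp: Omega_def spins_def flip_def)
  ultimately show ?thesis
    by simp
qed

lemma gen_op_glauber_gen:
  fixes \<eta> :: "'d::finite config"
  assumes \<eta>: "\<eta> \<in> Omega N"
  shows "gen_op (Omega N) (glauber_gen c J N) g \<eta> = (\<Sum>x\<in>Lam N. c J x \<eta> * (g (flip \<eta> x) - g \<eta>))"
proof -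
  let ?S = "Omega N :: 'd config set"
  have "gen_op ?S (glauber_gen c J N) g \<eta>
          = glauber_gen c J N \<eta> \<eta> * g \<eta> + (\<Sum>b\<in>?S - {\<eta>}. glauber_gen c J N \<eta> b * g b)"
    unfolding gen_op_def by (rule sum.remove[OF finite_Omega \<eta>])
  also have "(\<Sum>b\<in>?S - {\<eta>}. glauber_gen c J N \<eta> b * g b)
               = (\<Sum>x\<in>Lam N. \<Sum>b\<in>?S - {\<eta>}. if b = flip \<eta> x then c J x \<eta> * g b else 0)"
    by (subst sum.swap) (auto simp: glauber_gen_def sum_distrib_right intro!: sum.cong)
  also have "\<dots> = (\<Sum>x\<in>Lam N. c J x \<eta> * g (flip \<eta> x))"
  proof (rule sum.cong[OF refl])
    fix x :: "'d site"
    assume "x \<in> Lam N"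
    then have "flip \<eta> x \<in> ?S - {\<eta>}"
      by (rule flip_mem_Omega[OF \<eta>])
    then show "(\<Sum>b\<in>?S - {\<eta>}. if b = flip \<eta> x then c J x \<eta> * g b else 0) = c J x \<eta> * g (flip \<eta> x)"
      using finite_Omega[of N] by (subst sum.delta) auto
  qed
  moreover have "glauber_gen c J N \<eta> \<eta> = - (\<Sum>x\<in>Lam N. c J x \<eta>)"
    by (simp add: glauber_gen_def)
  ultimately show ?thesis
    by (simp add: sum_distrib_right sum_subtractf right_diff_distrib)
qed

lemma glauber_gen_add_diag_nonneg:
  fixes z :: "'d::finite config"
  assumes rates: "\<And>x. 0 \<le> c J x z \<and> c J x z \<le> cM"
  shows "0 \<le> glauber_gen c J N z b + (if z = b then cM * real N ^ CARD('d) else 0)"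
proof (cases "z = b")
  case True
  have "(\<Sum>x\<in>Lam N. c J x z) \<le> (\<Sum>x\<in>(Lam N :: 'd site set). cM)"
    using rates by (intro sum_mono) auto
  then show ?thesis
    using True by (simp add: glauber_gen_def card_Lam mult.commute)
next
  case False
  then show ?thesis
    using rates by (auto simp: glauber_gen_def intro!: sum_nonneg)
qed

lemma hamming_dist_flip_le:
  fixes \<sigma> \<eta> :: "'d::finite config"
  shows "hamming_dist N \<sigma> (flip \<eta> x) \<le> hamming_dist N \<sigma> \<eta> + 1"
proof -
  have "{y \<in> Lam N. flip \<eta> x y \<noteq> \<sigma> y} \<subseteq> insert x {y \<in> Lam N. \<eta> y \<noteq> \<sigma> y}"
    by (auto simp: flip_def)
  moreover have finite: "finite {y \<in> Lam N. \<eta> y \<noteq> \<sigma> y}"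
    by (rule finite_subset[OF _ finite_Lam]) auto
  ultimately have "hamming_dist N \<sigma> (flip \<eta> x) \<le> card (insert x {y \<in> Lam N. \<eta> y \<noteq> \<sigma> y})"
    unfolding hamming_dist_def by (intro card_mono) auto
  then show ?thesis
    using finite by (simp add: hamming_dist_def card_insert_if split: if_splits)
qed

lemma gen_op_glauber_gen_exp_le:
  fixes D :: "'d::finite config \<Rightarrow> real"
  assumes z: "z \<in> Omega N" and rates: "\<And>x. 0 \<le> c J x z \<and> c J x z \<le> cM"
    and "0 \<le> \<theta>" and flip: "\<And>x. D (flip z x) \<le> D z + 1"
  shows "gen_op (Omega N) (glauber_gen c J N) (\<lambda>\<eta>. exp (\<theta> * D \<eta>)) z
           \<le> cM * real N ^ CARD('d) * (exp \<theta> - 1) * exp (\<theta> * D z)"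
proof -
  have "exp (\<theta> * D (flip z x)) - exp (\<theta> * D z) \<le> (exp \<theta> - 1) * exp (\<theta> * D z)" for x
    using mult_left_mono[OF flip[of x] \<open>0 \<le> \<theta>\<close>]
    by (simp add: algebra_simps exp_add[symmetric])
  then have "c J x z * (exp (\<theta> * D (flip z x)) - exp (\<theta> * D z)) \<le> cM * ((exp \<theta> - 1) * exp (\<theta> * D z))" for x
    using rates[of x] \<open>0 \<le> \<theta>\<close>
    by (intro order_trans[OF mult_left_mono mult_right_mono]) auto
  then have "(\<Sum>x\<in>Lam N. c J x z * (exp (\<theta> * D (flip z x)) - exp (\<theta> * D z)))
               \<le> (\<Sum>x\<in>(Lam N :: 'd site set). cM * ((exp \<theta> - 1) * exp (\<theta> * D z)))"
    by (rule sum_mono)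
  then show ?thesis
    by (simp add: gen_op_glauber_gen[OF z] card_Lam mult_ac)
qed

lemma exp_half_less_2: "exp (1/2 :: real) < 2"
proof -
  have "exp (1/2 :: real) ^ 2 = exp 1"
    by (simp add: exp_of_nat_mult[symmetric])
  also have "\<dots> < 2 ^ 2"
    using exp_le by simp
  finally show ?thesis
    by (rule power_less_imp_less_base) simp
qed

text \<open>Exponential Chebyshev for the test function \<open>exp ((D - \<epsilon> N\<^sup>d / 2) / 2)\<close>, \<open>D\<close> the Hamming distance to the start.\<close>

lemma glauber_magn_deviation_le:
  fixes \<sigma>\<^sub>0 :: "'d::finite config"
  assumes rates: "\<And>x \<sigma>. \<sigma> \<in> Omega N \<Longrightarrow> 0 \<le> c J x \<sigma> \<and> c J x \<sigma> \<le> cM" and "0 < cM"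
    and K: "K \<ge> 1" and N: "N \<ge> 1" and \<sigma>\<^sub>0: "\<sigma>\<^sub>0 \<in> Omega N"
    and t: "0 \<le> t" "t \<le> \<epsilon> / (4 * cM)"
  shows "(\<Sum>\<eta>\<in>Omega N. trans_kernel (Omega N) (glauber_gen c J N) t \<sigma>\<^sub>0 \<eta> *
            (if L1dist (magn K N \<eta>) (magn K N \<sigma>\<^sub>0) \<ge> \<epsilon> then 1 else 0))
         \<le> exp (- (\<epsilon> * (2 - exp (1/2)) / 4) * real N ^ CARD('d))"
proof -
  define V where "V = real N ^ CARD('d)"
  define D where "D \<eta> = real (hamming_dist N \<sigma>\<^sub>0 \<eta>) - \<epsilon> * V / 2" for \<eta>
  define r where "r = cM * V * (exp (1/2) - 1)"
  have V: "0 < V"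
    using N by (simp add: V_def)
  have nonneg: "0 \<le> glauber_gen c J N z b + (if z = b then cM * V else 0)" if "z \<in> Omega N" for z b
    unfolding V_def by (rule glauber_gen_add_diag_nonneg) (rule rates[OF that])
  have dominates: "(if L1dist (magn K N \<eta>) (magn K N \<sigma>\<^sub>0) \<ge> \<epsilon> then 1 else 0) \<le> exp (1/2 * D \<eta>)"
    if "\<eta> \<in> Omega N" for \<eta>
    using hamming_dist_ge_of_L1dist_magn_ge[OF K N, of \<sigma>\<^sub>0 \<eta> \<epsilon>] \<sigma>\<^sub>0 that
    by (auto simp: D_def V_def Omega_def)
  have supersolution: "gen_op (Omega N) (glauber_gen c J N) (\<lambda>\<eta>. exp (1/2 * D \<eta>)) z \<le> r * exp (1/2 * D z)"
    if "z \<in> Omega N" for z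
  proof -
    have "D (flip z x) \<le> D z + 1" for x
      using hamming_dist_flip_le[of N \<sigma>\<^sub>0 z x] by (simp add: D_def)
    then show ?thesis
      using gen_op_glauber_gen_exp_le[where c = c and J = J and cM = cM and \<theta> = "1/2" and D = D,
          OF that rates[OF that]]
      by (simp add: r_def V_def)
  qed
  have "(\<Sum>\<eta>\<in>Omega N. trans_kernel (Omega N) (glauber_gen c J N) t \<sigma>\<^sub>0 \<eta> *
            (if L1dist (magn K N \<eta>) (magn K N \<sigma>\<^sub>0) \<ge> \<epsilon> then 1 else 0))
          \<le> exp (r * t) * exp (1/2 * D \<sigma>\<^sub>0)"
    using \<open>0 < cM\<close> V
    by (intro trans_kernel_sum_le_supersolution[where a = "cM * V"] finite_Omega \<sigma>\<^sub>0 t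
        nonneg dominates supersolution) (auto simp: r_def)
  also have "\<dots> \<le> exp (r * (\<epsilon> / (4 * cM)) - \<epsilon> * V / 4)"
  proof -
    have "0 \<le> r"
      using \<open>0 < cM\<close> V by (simp add: r_def)
    then have "r * t \<le> r * (\<epsilon> / (4 * cM))"
      using t(2) by (rule mult_left_mono[rotated])
    then show ?thesis
      by (simp add: D_def hamming_dist_def exp_add[symmetric])
  qed
  also have "\<dots> = exp (- (\<epsilon> * (2 - exp (1/2)) / 4) * real N ^ CARD('d))"
    using \<open>0 < cM\<close> by (simp add: r_def V_def field_simps)
  finally show ?thesis .
qed

lemma ising_nonneg: "0 \<le> ising \<beta> J N \<sigma>"
  unfolding ising_def ising_weight_def by (intro divide_nonneg_nonneg sum_nonneg) auto

lemma sum_ising_le_1: "(\<Sum>\<sigma>\<in>Omega N. ising \<beta> J N \<sigma>) \<le> 1"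
  unfolding ising_def sum_divide_distrib[symmetric] by (simp add: divide_le_eq_1)

lemma dyn_prob_le_of_pointwise:
  assumes "0 \<le> B"
    and "\<And>\<sigma>. \<sigma> \<in> Omega N \<Longrightarrow>
           (\<Sum>\<eta>\<in>Omega N. trans_kernel (Omega N) (glauber_gen c J N) t \<sigma> \<eta> *
              (if L1dist (magn K N \<eta>) (magn K N \<sigma>) \<ge> \<epsilon> then 1 else 0)) \<le> B"
  shows "dyn_prob \<beta> c J N K t \<epsilon> \<le> B"
proof -
  have "dyn_prob \<beta> c J N K t \<epsilon> =
          (\<Sum>\<sigma>\<in>Omega N. ising \<beta> J N \<sigma> * (\<Sum>\<eta>\<in>Omega N. trans_kernel (Omega N) (glauber_gen c J N) t \<sigma> \<eta> *
              (if L1dist (magn K N \<eta>) (magn K N \<sigma>) \<ge> \<epsilon> then 1 else 0)))"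
    unfolding dyn_prob_def by (simp add: sum_distrib_left mult.assoc)
  also have "\<dots> \<le> (\<Sum>\<sigma>\<in>Omega N. ising \<beta> J N \<sigma> * B)"
    by (intro sum_mono mult_left_mono assms(2) ising_nonneg)
  also have "\<dots> \<le> B"
    using mult_right_mono[OF sum_ising_le_1 assms(1)] by (simp add: sum_distrib_right)
  finally show ?thesis .
qed

lemma rates_ok_bounds:
  assumes "rates_ok \<beta> cm cM c" "admissible J" "\<sigma> \<in> Omega N"
  shows "0 \<le> c J x \<sigma> \<and> c J x \<sigma> \<le> cM"
proof -
  have bounds: "\<forall>J x \<sigma>. admissible J \<and> \<sigma> \<in> spins \<longrightarrow> cm \<le> c J x \<sigma> \<and> c J x \<sigma> \<le> cM" and "0 < cm"
    using assms(1) unfolding rates_ok_def by blast+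
  have "cm \<le> c J x \<sigma>" "c J x \<sigma> \<le> cM"
    using bounds assms(2,3) by (simp_all add: Omega_def)
  with \<open>0 < cm\<close> show ?thesis
    by linarith
qed

theorem lemma3p19:
  fixes \<beta> \<epsilon> cm cM :: real and c :: "'d::finite rates"
  assumes "CARD('d) \<ge> 2"
    and "\<beta> > 0" and "\<epsilon> > 0"
    and "rates_ok \<beta> cm cM c"
  shows "\<exists>\<kappa>>0. \<forall>K::nat. K \<ge> 1 \<longrightarrow> (\<exists>N0. \<forall>N\<ge>N0.
           \<forall>t\<in>{0..\<epsilon> / (4 * cM)}. \<forall>J. admissible J \<longrightarrow>
             dyn_prob \<beta> c J N K t \<epsilon> \<le> exp (- \<kappa> * real N ^ CARD('d)))"
proof (intro exI[of _ "\<epsilon> * (2 - exp (1/2)) / 4"] exI[of _ "1::nat"] conjI allI impI ballI)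
  show "\<epsilon> * (2 - exp (1/2)) / 4 > 0"
    using exp_half_less_2 \<open>\<epsilon> > 0\<close> by simp
  have "0 < cM"
    using assms(4) by (auto simp: rates_ok_def)
  fix K N :: nat and t :: real and J :: "'d coupling"
  assume "K \<ge> 1" "1 \<le> N" "t \<in> {0..\<epsilon> / (4 * cM)}" "admissible J"
  then show "dyn_prob \<beta> c J N K t \<epsilon> \<le> exp (- (\<epsilon> * (2 - exp (1/2)) / 4) * real N ^ CARD('d))"
    using rates_ok_bounds[OF assms(4)] \<open>0 < cM\<close>
    by (intro dyn_prob_le_of_pointwise glauber_magn_deviation_le) auto
qed

end
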